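(* Let $k$ be a field of characteristic $\ne 2$ and let $n$ be a positive even integer. Then there is an isomorphism of symmetric bilinear forms over $k$: \[ \phi^{\mathrm{even}}_n \cong \begin{cases} \phi^{\mathrm{odd}}_n & \text{if } n \equiv 0 \bmod 4,\\[2pt] \left\langle 2\binom{n}{n/2}\right\rangle \oplus \phi^{\mathrm{odd}}_n & \text{if } n \equiv 2 \bmod 4. \end{cases} \]
   Context: For $\lambda \in k$, $\langle \lambda \rangle$ denotes a one-dimensional $k$-vector space with basis $e$ and symmetric bilinear form $(e,e)\mapsto\lambda$ (possibly degenerate if $\lambda = 0$ in $k$); $\oplus$ is orthogonal sum. Define $\phi^{\mathrm{odd}}_n := \bigoplus_{0 \le i < n/2,\ i \text{ odd}} \langle \binom{n}{i}\rangle$ and $\phi^{\mathrm{even}}_n := \bigoplus_{0 \le i < n/2,\ i \text{ even}} \langle \binom{n}{i}\rangle$, with binomial coefficients viewed as elements of $k$. *)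

theory Defs
  imports Main
begin

text \<open>A diagonal symmetric bilinear form <d_0> (+) ... (+) <d_{m-1}> is represented by the
list [d_0,...,d_{m-1}]; its underlying space is k^m, realised as the functions
nat => k vanishing outside {0..<m}. Orthogonal sum of diagonal forms is list append.\<close>

definition coord_space :: "nat \<Rightarrow> (nat \<Rightarrow> 'a::field) set" where
  "coord_space m = {x. \<forall>i\<ge>m. x i = 0}"

definition diag_form :: "'a::field list \<Rightarrow> (nat \<Rightarrow> 'a) \<Rightarrow> (nat \<Rightarrow> 'a) \<Rightarrow> 'a" where
  "diag_form ds x y = (\<Sum>i<length ds. ds ! i * x i * y i)"

definition isometric :: "'a::field list \<Rightarrow> 'a list \<Rightarrow> bool" where
  "isometric ds es \<longleftrightarrow> (\<exists>f. bij_betw f (coord_space (length ds)) (coord_space (length es))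
      \<and> (\<forall>x\<in>coord_space (length ds). \<forall>y\<in>coord_space (length ds). f (\<lambda>i. x i + y i) = (\<lambda>i. f x i + f y i))
      \<and> (\<forall>c. \<forall>x\<in>coord_space (length ds). f (\<lambda>i. c * x i) = (\<lambda>i. c * f x i))
      \<and> (\<forall>x\<in>coord_space (length ds). \<forall>y\<in>coord_space (length ds).
            diag_form es (f x) (f y) = diag_form ds x y))"

definition phi_odd :: "nat \<Rightarrow> 'a::field list" where
  "phi_odd n = map (\<lambda>i. of_nat (n choose i)) (filter (\<lambda>i. odd i \<and> 2 * i < n) [0..<n])"

definition phi_even :: "nat \<Rightarrow> 'a::field list" where
  "phi_even n = map (\<lambda>i. of_nat (n choose i)) (filter (\<lambda>i. even i \<and> 2 * i < n) [0..<n])"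

end

theory Submission
  imports Defs Complex_Main
begin

text \<open>Let n = 2m and let K be the Krawtchouk matrix: row i of K lists the coefficients
of (x + 1)^i (x - 1)^(n - i). Comparing coefficients of polynomial identities gives
K^2 = 2^n, the symmetry binom(n,i) K_ij = binom(n,j) K_ji and the reflection rules
K_{i,n-j} = (-1)^(n-i) K_ij, K_{n-i,j} = (-1)^(n+j) K_ij. With the reflection rules every
sum over 0..n folds onto 0..m and splits by parity. It follows that the block of 2^(-m) K
with odd rows k \<le> m and even columns i < m, each row k < m doubled because it stands for
both k and n - k, is invertible, and by the symmetry it carries phi_even isometrically onto
the sum of <binom(n,k)> over odd k < m, plus <2 binom(n,m)> when m is odd.\<close>

definition krawtchouk :: "nat \<Rightarrow> nat \<Rightarrow> nat \<Rightarrow> int" where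
  "krawtchouk n i j =
     (\<Sum>k\<le>j. int (i choose k) * int ((n - i) choose (j - k)) * (-1) ^ (n - i - (j - k)))"

lemma Cauchy_product_atMost:
  fixes F G :: "nat \<Rightarrow> 'b::comm_semiring_0"
  assumes "\<And>k l. n < k + l \<Longrightarrow> F k * G l = 0"
  shows "(\<Sum>k\<le>n. F k) * (\<Sum>l\<le>n. G l) = (\<Sum>j\<le>n. \<Sum>k\<le>j. F k * G (j - k))"
proof -
  have "(\<Sum>k\<le>n. F k) * (\<Sum>l\<le>n. G l) = (\<Sum>(k, l)\<in>{(k, l). k + l \<le> n}. F k * G l)"
    unfolding sum_product sum.cartesian_product
  proof (rule sum.mono_neutral_right)
    show "\<forall>x\<in>{..n} \<times> {..n} - {(k, l). k + l \<le> n}.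
        (case x of (k, l) \<Rightarrow> F k * G l) = 0"
    proof
      fix x assume "x \<in> {..n} \<times> {..n} - {(k, l). k + l \<le> n}"
      then obtain k l where "x = (k, l)" "n < k + l"
        by auto
      then show "(case x of (k, l) \<Rightarrow> F k * G l) = 0"
        using assms by simp
    qed
  qed auto
  also have "\<dots> = (\<Sum>j\<le>n. \<Sum>k\<le>j. F k * G (j - k))"
    by (rule sum.triangle_reindex_eq)
  finally show ?thesis .
qed

lemma krawtchouk_generating:
  fixes a b :: "'b::comm_ring_1"
  assumes "i \<le> n"
  shows "(\<Sum>j\<le>n. of_int (krawtchouk n i j) * a ^ j * b ^ (n - j))
       = (a + b) ^ i * (a - b) ^ (n - i)"
proof -
  define F where "F k = of_nat (i choose k) * a ^ k * b ^ (i - k)" for k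
  define G where "G l = of_nat ((n - i) choose l) * a ^ l * (- b) ^ (n - i - l)" for l
  have F_zero: "F k = 0" if "i < k" for k
    using that by (simp add: F_def binomial_eq_0)
  have G_zero: "G l = 0" if "n - i < l" for l
    using that by (simp add: G_def binomial_eq_0)
  have "(a + b) ^ i * (a - b) ^ (n - i) = (\<Sum>k\<le>n. F k) * (\<Sum>l\<le>n. G l)"
  proof -
    have "(\<Sum>k\<le>n. F k) = (\<Sum>k\<le>i. F k)" "(\<Sum>l\<le>n. G l) = (\<Sum>l\<le>n - i. G l)"
      using assms by (auto intro!: sum.mono_neutral_right F_zero G_zero)
    then show ?thesis
      using binomial_ring[of a b i] binomial_ring[of a "- b" "n - i"] by (simp add: F_def G_def)
  qed
  also have "\<dots> = (\<Sum>j\<le>n. \<Sum>k\<le>j. F k * G (j - k))"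
  proof (rule Cauchy_product_atMost)
    fix k l assume "n < k + l"
    then have "i < k \<or> n - i < l"
      using assms by arith
    then show "F k * G l = 0"
      using F_zero G_zero by auto
  qed
  also have "\<dots> = (\<Sum>j\<le>n. of_int (krawtchouk n i j) * a ^ j * b ^ (n - j))"
  proof (rule sum.cong [OF refl])
    fix j assume "j \<in> {..n}"
    have "F k * G (j - k) = of_int (int (i choose k) * int ((n - i) choose (j - k))
        * (-1) ^ (n - i - (j - k))) * a ^ j * b ^ (n - j)" if "k \<le> j" for k
    proof (cases "k \<le> i \<and> j - k \<le> n - i")
      case True
      then have "k + (j - k) = j" "i - k + (n - i - (j - k)) = n - j"
        using that assms by arith+
      then have "a ^ k * a ^ (j - k) = a ^ j"
        and "b ^ (i - k) * b ^ (n - i - (j - k)) = b ^ (n - j)"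
        by (simp_all only: flip: power_add)
      moreover have "F k * G (j - k) = of_nat (i choose k) * of_nat ((n - i) choose (j - k))
          * (-1) ^ (n - i - (j - k)) * (a ^ k * a ^ (j - k))
          * (b ^ (i - k) * b ^ (n - i - (j - k)))"
        unfolding F_def G_def power_minus[of b] by (simp only: mult_ac)
      ultimately show ?thesis by simp
    next
      case False
      then show ?thesis by (auto simp: F_def G_def binomial_eq_0 not_le)
    qed
    then show "(\<Sum>k\<le>j. F k * G (j - k))
        = of_int (krawtchouk n i j) * a ^ j * b ^ (n - j)"
      by (simp add: krawtchouk_def sum_distrib_right)
  qed
  finally show ?thesis ..
qed

lemma krawtchouk_univariate:
  fixes x :: "'b::comm_ring_1"
  assumes "i \<le> n"
  shows "(\<Sum>j\<le>n. of_int (krawtchouk n i j) * x ^ j) = (x + 1) ^ i * (x - 1) ^ (n - i)"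
  using krawtchouk_generating[OF assms, of x 1] by simp

lemma int_coeffs_eq_if_real_polyfun_eq:
  fixes c d :: "nat \<Rightarrow> int"
  assumes "\<And>x::real. (\<Sum>j\<le>n. of_int (c j) * x ^ j) = (\<Sum>j\<le>n. of_int (d j) * x ^ j)"
    and "j \<le> n"
  shows "c j = d j"
  using assms polyfun_eq_coeffs[of "\<lambda>j. real_of_int (c j)" n "\<lambda>j. of_int (d j)"] by simp

lemma int_coeffs_eq_if_real_polyfun2_eq:
  fixes c d :: "nat \<Rightarrow> nat \<Rightarrow> int"
  assumes eq: "\<And>x y::real. (\<Sum>i\<le>n. \<Sum>j\<le>n. of_int (c i j) * x ^ i * y ^ j)
                            = (\<Sum>i\<le>n. \<Sum>j\<le>n. of_int (d i j) * x ^ i * y ^ j)"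
    and "i \<le> n" "j \<le> n"
  shows "c i j = d i j"
proof (rule int_coeffs_eq_if_real_polyfun_eq[OF _ \<open>j \<le> n\<close>])
  fix y :: real
  have "\<forall>x::real. (\<Sum>i\<le>n. (\<Sum>j\<le>n. of_int (c i j) * y ^ j) * x ^ i)
                  = (\<Sum>i\<le>n. (\<Sum>j\<le>n. of_int (d i j) * y ^ j) * x ^ i)"
    using eq by (simp add: sum_distrib_left sum_distrib_right mult_ac)
  then show "(\<Sum>j\<le>n. of_int (c i j) * y ^ j) = (\<Sum>j\<le>n. of_int (d i j) * y ^ j)"
    using \<open>i \<le> n\<close> by (simp only: polyfun_eq_coeffs)
qed

lemma krawtchouk_square:
  assumes "i \<le> n" "l \<le> n"
  shows "(\<Sum>j\<le>n. krawtchouk n i j * krawtchouk n j l) = (if i = l then 2 ^ n else 0)"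
proof (rule int_coeffs_eq_if_real_polyfun_eq[OF _ \<open>l \<le> n\<close>])
  fix x :: real
  have "(\<Sum>l\<le>n. of_int (\<Sum>j\<le>n. krawtchouk n i j * krawtchouk n j l) * x ^ l)
      = (\<Sum>l\<le>n. \<Sum>j\<le>n. of_int (krawtchouk n i j) * (of_int (krawtchouk n j l) * x ^ l))"
    by (simp add: sum_distrib_right mult.assoc)
  also have "\<dots>
      = (\<Sum>j\<le>n. of_int (krawtchouk n i j) * (\<Sum>l\<le>n. of_int (krawtchouk n j l) * x ^ l))"
    by (subst sum.swap) (simp add: sum_distrib_left)
  also have "\<dots> = (\<Sum>j\<le>n. of_int (krawtchouk n i j) * (x + 1) ^ j * (x - 1) ^ (n - j))"
    by (simp add: krawtchouk_univariate mult.assoc)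
  also have "\<dots> = ((x + 1) + (x - 1)) ^ i * ((x + 1) - (x - 1)) ^ (n - i)"
    by (rule krawtchouk_generating[OF \<open>i \<le> n\<close>])
  also have "\<dots> = 2 ^ n * x ^ i"
    using \<open>i \<le> n\<close> by (simp add: power_mult_distrib flip: power_add)
  also have "\<dots> = (\<Sum>l\<le>n. of_int (if i = l then 2 ^ n else 0) * x ^ l)"
    using \<open>i \<le> n\<close> by (simp add: if_distrib if_distribR sum.delta cong: if_cong)
  finally show "(\<Sum>l\<le>n. of_int (\<Sum>j\<le>n. krawtchouk n i j * krawtchouk n j l) * x ^ l)
      = (\<Sum>l\<le>n. of_int (if i = l then 2 ^ n else 0) * x ^ l)" .
qed

lemma krawtchouk_reflect_right:
  assumes "i \<le> n" "j \<le> n"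
  shows "krawtchouk n i (n - j) = (-1) ^ (n - i) * krawtchouk n i j"
proof (rule int_coeffs_eq_if_real_polyfun_eq[OF _ \<open>j \<le> n\<close>])
  fix x :: real
  have "(\<Sum>j\<le>n. of_int (krawtchouk n i (n - j)) * x ^ j)
      = (\<Sum>j\<le>n. of_int (krawtchouk n i j) * 1 ^ j * x ^ (n - j))"
    by (rule sum.reindex_bij_witness[where i="\<lambda>j. n - j" and j="\<lambda>j. n - j"]) auto
  also have "\<dots> = (1 + x) ^ i * (1 - x) ^ (n - i)"
    by (rule krawtchouk_generating[OF \<open>i \<le> n\<close>])
  also have "\<dots> = (-1) ^ (n - i) * ((x + 1) ^ i * (x - 1) ^ (n - i))"
    by (simp add: power_minus[symmetric] add.commute)
  also have "\<dots> = (-1) ^ (n - i) * (\<Sum>j\<le>n. of_int (krawtchouk n i j) * x ^ j)"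
    by (simp only: krawtchouk_univariate[OF \<open>i \<le> n\<close>])
  also have "\<dots> = (\<Sum>j\<le>n. of_int ((-1) ^ (n - i) * krawtchouk n i j) * x ^ j)"
    by (simp add: sum_distrib_left mult.assoc)
  finally show "(\<Sum>j\<le>n. of_int (krawtchouk n i (n - j)) * x ^ j)
      = (\<Sum>j\<le>n. of_int ((-1) ^ (n - i) * krawtchouk n i j) * x ^ j)" .
qed

lemma krawtchouk_reflect_left:
  assumes "i \<le> n" "j \<le> n"
  shows "krawtchouk n (n - i) j = (-1) ^ (n + j) * krawtchouk n i j"
proof (rule int_coeffs_eq_if_real_polyfun_eq[OF _ \<open>j \<le> n\<close>])
  fix x :: real
  have "(\<Sum>j\<le>n. of_int (krawtchouk n (n - i) j) * x ^ j) = (x + 1) ^ (n - i) * (x - 1) ^ i"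
    using krawtchouk_univariate[of "n - i" n x] \<open>i \<le> n\<close> by simp
  also have "\<dots> = (-1) ^ n * ((- x + 1) ^ i * (- x - 1) ^ (n - i))"
  proof -
    have "(-1::real) ^ n = (-1) ^ i * (-1) ^ (n - i)"
      using \<open>i \<le> n\<close> by (simp flip: power_add)
    then show ?thesis
      by (simp add: power_minus[symmetric] algebra_simps)
  qed
  also have "\<dots> = (-1) ^ n * (\<Sum>j\<le>n. of_int (krawtchouk n i j) * (- x) ^ j)"
    by (simp only: krawtchouk_univariate[OF \<open>i \<le> n\<close>])
  also have "\<dots> = (\<Sum>j\<le>n. of_int ((-1) ^ (n + j) * krawtchouk n i j) * x ^ j)"
    by (simp add: sum_distrib_left power_add power_minus[of x] mult_ac)
  finally show "(\<Sum>j\<le>n. of_int (krawtchouk n (n - i) j) * x ^ j)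
      = (\<Sum>j\<le>n. of_int ((-1) ^ (n + j) * krawtchouk n i j) * x ^ j)" .
qed

lemma krawtchouk_binomial_generating:
  fixes x y :: real
  shows "(\<Sum>i\<le>n. \<Sum>j\<le>n. of_int (int (n choose i) * krawtchouk n i j) * x ^ i * y ^ j)
       = (x * y + x + y - 1) ^ n"
proof -
  have "(\<Sum>i\<le>n. \<Sum>j\<le>n. of_int (int (n choose i) * krawtchouk n i j) * x ^ i * y ^ j)
      = (\<Sum>i\<le>n. of_nat (n choose i) * (x * (y + 1)) ^ i * (y - 1) ^ (n - i))"
  proof (rule sum.cong [OF refl])
    fix i assume "i \<in> {..n}"
    then have "(\<Sum>j\<le>n. of_int (krawtchouk n i j) * y ^ j) = (y + 1) ^ i * (y - 1) ^ (n - i)"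
      by (simp add: krawtchouk_univariate)
    moreover have "(\<Sum>j\<le>n. of_int (int (n choose i) * krawtchouk n i j) * x ^ i * y ^ j)
        = of_nat (n choose i) * x ^ i * (\<Sum>j\<le>n. of_int (krawtchouk n i j) * y ^ j)"
      by (simp add: sum_distrib_left mult_ac)
    ultimately show "(\<Sum>j\<le>n. of_int (int (n choose i) * krawtchouk n i j) * x ^ i * y ^ j)
        = of_nat (n choose i) * (x * (y + 1)) ^ i * (y - 1) ^ (n - i)"
      by (simp add: power_mult_distrib mult_ac)
  qed
  also have "\<dots> = (x * (y + 1) + (y - 1)) ^ n"
    by (rule binomial_ring[symmetric])
  finally show ?thesis by (simp add: algebra_simps)
qed

lemma krawtchouk_binomial_symmetric:
  assumes "i \<le> n" "j \<le> n"
  shows "int (n choose i) * krawtchouk n i j = int (n choose j) * krawtchouk n j i"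
proof (rule int_coeffs_eq_if_real_polyfun2_eq[OF _ assms])
  fix x y :: real
  have "(\<Sum>i\<le>n. \<Sum>j\<le>n. of_int (int (n choose j) * krawtchouk n j i) * x ^ i * y ^ j)
      = (\<Sum>j\<le>n. \<Sum>i\<le>n. of_int (int (n choose j) * krawtchouk n j i) * y ^ j * x ^ i)"
    by (subst sum.swap) (simp only: mult_ac)
  also have "\<dots> = (y * x + y + x - 1) ^ n"
    by (rule krawtchouk_binomial_generating)
  also have "\<dots> = (x * y + x + y - 1) ^ n"
    by (simp add: ac_simps)
  finally show "(\<Sum>i\<le>n. \<Sum>j\<le>n. of_int (int (n choose i) * krawtchouk n i j) * x ^ i * y ^ j)
      = (\<Sum>i\<le>n. \<Sum>j\<le>n. of_int (int (n choose j) * krawtchouk n j i) * x ^ i * y ^ j)"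
    by (simp only: krawtchouk_binomial_generating)
qed

lemma sum_atMost_reflection_fold:
  fixes f :: "nat \<Rightarrow> 'b::comm_semiring_1"
  assumes "\<And>k. k \<le> 2 * m \<Longrightarrow> f (2 * m - k) = f k"
  shows "(\<Sum>k\<le>2 * m. f k) = (\<Sum>k\<le>m. (if k = m then 1 else 2) * f k)"
proof -
  have upper: "(\<Sum>k\<in>{m<..2 * m}. f k) = (\<Sum>k<m. f k)"
    by (rule sum.reindex_bij_witness[where i="\<lambda>k. 2 * m - k" and j="\<lambda>k. 2 * m - k"])
      (use assms in auto)
  have "(\<Sum>k\<le>2 * m. f k) = (\<Sum>k\<le>m. f k) + (\<Sum>k\<in>{m<..2 * m}. f k)"
    by (subst sum.union_disjoint[symmetric]) (auto intro: sum.cong)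
  also have "\<dots> = (\<Sum>k\<le>m. f k) + (\<Sum>k<m. f k)"
    by (simp only: upper)
  also have "\<dots> = (\<Sum>k\<le>m. (if k = m then 1 else 2) * f k)"
    by (simp add: lessThan_Suc_atMost[symmetric] sum.distrib[symmetric] mult_2 add_ac
        cong: if_cong)
  finally show ?thesis .
qed

lemma minus_one_power_diff_even:
  assumes "even n" "k \<le> n"
  shows "(-1 :: 'b::ring_1) ^ (n - k) = (-1) ^ k"
  using assms by (simp add: minus_one_power_iff)

lemma krawtchouk_odd_half_square:
  assumes n: "n = 2 * m" and i: "even i" "i < m" and j: "even j" "j < m"
  shows "(\<Sum>k | odd k \<and> k \<le> m. (if k = m then 2 else 4) * (krawtchouk n i k * krawtchouk n k j))
       = (if i = j then 2 ^ n else 0)"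
proof -
  define g where "g k = krawtchouk n i k * krawtchouk n k j" for k
  have ev: "even n" using n by simp
  \<comment> \<open>The twist moves column j to n - j, and n - j \<noteq> i since i, j < m.\<close>
  have twisted: "(\<Sum>k\<le>n. (-1) ^ k * g k) = 0"
  proof -
    have "(\<Sum>k\<le>n. (-1) ^ k * g k) = (\<Sum>k\<le>n. krawtchouk n i k * krawtchouk n k (n - j))"
      using ev n j
      by (intro sum.cong refl) (simp add: g_def krawtchouk_reflect_right minus_one_power_diff_even)
    also have "\<dots> = 0"
      using n i j by (simp add: krawtchouk_square)
    finally show ?thesis .
  qed
  have sym: "(1 - (-1) ^ (n - k)) * g (n - k) = (1 - (-1) ^ k) * g k" if "k \<le> n" for k
    using that ev n i j
    by (simp add: g_def krawtchouk_reflect_right krawtchouk_reflect_left minus_one_power_diff_even)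
  have "(if i = j then 2 ^ n else 0) = (\<Sum>k\<le>n. (1 - (-1) ^ k) * g k)"
    using n i j twisted by (simp add: g_def krawtchouk_square left_diff_distrib sum_subtractf)
  also have "\<dots> = (\<Sum>k\<le>m. (if k = m then 1 else 2) * ((1 - (-1) ^ k) * g k))"
    using sym n by (simp add: sum_atMost_reflection_fold)
  also have "\<dots> = (\<Sum>k\<le>m. if odd k then (if k = m then 2 else 4) * g k else 0)"
    by (intro sum.cong refl) auto
  also have "\<dots> = (\<Sum>k | odd k \<and> k \<le> m. (if k = m then 2 else 4) * g k)"
    by (simp add: sum.inter_filter[symmetric] conj_commute)
  finally show ?thesis by (simp add: g_def)
qed

lemma krawtchouk_even_half_square:
  assumes n: "n = 2 * m" and k: "odd k" "k \<le> m" and l: "odd l" "l \<le> m"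
  shows "(if k = m then 2 else 4) * (\<Sum>i | even i \<and> i < m. krawtchouk n k i * krawtchouk n i l)
       = (if k = l then 2 ^ n else 0)"
proof -
  define f where "f i = krawtchouk n k i * krawtchouk n i l" for i
  have ev: "even n" using n by simp
  have twisted: "(\<Sum>i\<le>n. (-1) ^ i * f i) = (if k = m \<and> l = m then 2 ^ n else 0)"
  proof -
    have "(\<Sum>i\<le>n. (-1) ^ i * f i) = (\<Sum>i\<le>n. krawtchouk n k i * krawtchouk n i (n - l))"
      using ev n l
      by (intro sum.cong refl) (simp add: f_def krawtchouk_reflect_right minus_one_power_diff_even)
    also have "\<dots> = (if k = m \<and> l = m then 2 ^ n else 0)"
      using n k l by (auto simp: krawtchouk_square)
    finally show ?thesis .
  qed
  have sym: "(1 + (-1) ^ (n - i)) * f (n - i) = (1 + (-1) ^ i) * f i" if "i \<le> n" for i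
    using that ev n k l
    by (simp add: f_def krawtchouk_reflect_right krawtchouk_reflect_left minus_one_power_diff_even)
  have middle: "(1 + (-1) ^ m) * f m = 0"
  proof (cases "even m")
    case True
    have "krawtchouk n k m = (-1) ^ (n - k) * krawtchouk n k m"
      using krawtchouk_reflect_right[of k n m] n k by simp
    then have "krawtchouk n k m = 0"
      using ev k n by (simp add: minus_one_power_diff_even)
    then show ?thesis by (simp add: f_def)
  qed simp
  have "(if k = l then 2 ^ n else 0) + (if k = m \<and> l = m then 2 ^ n else 0)
      = (\<Sum>i\<le>n. (1 + (-1) ^ i) * f i)"
    using n k l twisted by (simp add: f_def krawtchouk_square distrib_right sum.distrib)
  also have "\<dots> = (\<Sum>i\<le>m. (if i = m then 1 else 2) * ((1 + (-1) ^ i) * f i))"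
    using sym n by (simp add: sum_atMost_reflection_fold)
  also have "\<dots> = (\<Sum>i<m. 2 * ((1 + (-1) ^ i) * f i)) + (1 + (-1) ^ m) * f m"
    by (simp add: lessThan_Suc_atMost[symmetric] cong: if_cong)
  also have "\<dots> = (\<Sum>i<m. if even i then 4 * f i else 0)"
    unfolding middle add_0_right by (intro sum.cong refl) (auto simp flip: mult.assoc)
  also have "\<dots> = 4 * (\<Sum>i | even i \<and> i < m. f i)"
    by (simp add: sum.inter_filter[symmetric] sum_distrib_left conj_commute)
  finally show ?thesis by (auto simp: f_def)
qed

definition mat_apply ::
    "nat \<Rightarrow> nat \<Rightarrow> (nat \<Rightarrow> nat \<Rightarrow> 'a::comm_ring_1) \<Rightarrow> (nat \<Rightarrow> 'a) \<Rightarrow> nat \<Rightarrow> 'a" where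
  "mat_apply r c P x = (\<lambda>q. if q < r then \<Sum>p<c. P q p * x p else 0)"

lemma mat_apply_in_coord_space: "mat_apply r c P x \<in> coord_space r"
  by (simp add: mat_apply_def coord_space_def)

lemma mat_apply_mat_apply:
  "mat_apply r c P (mat_apply c s Q x) = mat_apply r s (\<lambda>q p. \<Sum>t<c. P q t * Q t p) x"
  by (auto simp: mat_apply_def sum_distrib_left sum_distrib_right mult.assoc intro!: sum.swap)

lemma mat_apply_identity:
  assumes "\<And>q p. q < r \<Longrightarrow> p < r \<Longrightarrow> E q p = (if q = p then 1 else 0)"
    and "x \<in> coord_space r"
  shows "mat_apply r r E x = x"
proof
  fix q
  show "mat_apply r r E x q = x q"
  proof (cases "q < r")
    case True
    then have "(\<Sum>p<r. E q p * x p) = (\<Sum>p<r. if q = p then x p else 0)"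
      using assms(1) by (intro sum.cong) auto
    with True show ?thesis by (simp add: mat_apply_def)
  next
    case False
    with assms(2) show ?thesis by (simp add: mat_apply_def coord_space_def)
  qed
qed

lemma mat_apply_add:
  "mat_apply r c P (\<lambda>i. x i + y i) = (\<lambda>i. mat_apply r c P x i + mat_apply r c P y i)"
  by (auto simp: mat_apply_def distrib_left sum.distrib)

lemma mat_apply_scale: "mat_apply r c P (\<lambda>i. a * x i) = (\<lambda>i. a * mat_apply r c P x i)"
  by (auto simp: mat_apply_def sum_distrib_left mult_ac)

lemma diag_form_mat_apply:
  "diag_form es (mat_apply (length es) c P x) (mat_apply (length es) c P y)
     = (\<Sum>p<c. \<Sum>p'<c. (\<Sum>q<length es. es ! q * P q p * P q p') * (x p * y p'))"
proof -
  have "diag_form es (mat_apply (length es) c P x) (mat_apply (length es) c P y)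
      = (\<Sum>q<length es. \<Sum>p<c. \<Sum>p'<c. es ! q * P q p * P q p' * (x p * y p'))"
    by (simp add: diag_form_def mat_apply_def sum_product sum_distrib_left mult_ac)
  also have "\<dots> = (\<Sum>p<c. \<Sum>p'<c. (\<Sum>q<length es. es ! q * P q p * P q p') * (x p * y p'))"
    by (simp add: sum_distrib_right sum.swap[of _ "{..<length es}"])
  finally show ?thesis .
qed

lemma isometric_by_matrices:
  fixes ds es :: "'a::field list"
  assumes QP: "\<And>p p'. p < length ds \<Longrightarrow> p' < length ds \<Longrightarrow>
      (\<Sum>q<length es. Q p q * P q p') = (if p = p' then 1 else 0)"
    and PQ: "\<And>q q'. q < length es \<Longrightarrow> q' < length es \<Longrightarrow>
      (\<Sum>p<length ds. P q p * Q p q') = (if q = q' then 1 else 0)"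
    and form: "\<And>p p'. p < length ds \<Longrightarrow> p' < length ds \<Longrightarrow>
      (\<Sum>q<length es. es ! q * P q p * P q p') = (if p = p' then ds ! p else 0)"
  shows "isometric ds es"
proof -
  define f where "f = mat_apply (length es) (length ds) P"
  define g where "g = mat_apply (length ds) (length es) Q"
  have "bij_betw f (coord_space (length ds)) (coord_space (length es))"
  proof (rule bij_betw_byWitness[where f'=g])
    show "\<forall>x\<in>coord_space (length ds). g (f x) = x"
      using QP by (simp add: f_def g_def mat_apply_mat_apply mat_apply_identity)
    show "\<forall>y\<in>coord_space (length es). f (g y) = y"
      using PQ by (simp add: f_def g_def mat_apply_mat_apply mat_apply_identity)
  qed (auto simp: f_def g_def mat_apply_in_coord_space)
  moreover have "diag_form es (f x) (f y) = diag_form ds x y" for x y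
  proof -
    have "diag_form es (f x) (f y)
        = (\<Sum>p<length ds. \<Sum>p'<length ds. (if p = p' then ds ! p else 0) * (x p * y p'))"
      unfolding f_def diag_form_mat_apply using form by (intro sum.cong refl) simp
    also have "\<dots> = diag_form ds x y"
      by (simp add: diag_form_def if_distrib if_distribR mult.assoc cong: if_cong)
    finally show ?thesis .
  qed
  ultimately show ?thesis
    unfolding isometric_def f_def by (blast intro: mat_apply_add mat_apply_scale)
qed

lemma sum_nth_distinct:
  assumes "distinct xs"
  shows "(\<Sum>q<length xs. h (xs ! q)) = (\<Sum>x\<in>set xs. h x)"
  using assms
  by (simp add: sum_list_distinct_conv_sum_set[symmetric] sum_list_sum_nth atLeast0LessThan)

lemma isometric_map_by_matrices:
  fixes w :: "'i \<Rightarrow> 'a::field" and v :: "'j \<Rightarrow> 'a"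
  assumes xs: "distinct xs" and ys: "distinct ys"
    and QP: "\<And>i i'. i \<in> set xs \<Longrightarrow> i' \<in> set xs \<Longrightarrow>
      (\<Sum>k\<in>set ys. Q i k * P k i') = (if i = i' then 1 else 0)"
    and PQ: "\<And>k k'. k \<in> set ys \<Longrightarrow> k' \<in> set ys \<Longrightarrow>
      (\<Sum>i\<in>set xs. P k i * Q i k') = (if k = k' then 1 else 0)"
    and form: "\<And>i i'. i \<in> set xs \<Longrightarrow> i' \<in> set xs \<Longrightarrow>
      (\<Sum>k\<in>set ys. v k * P k i * P k i') = (if i = i' then w i else 0)"
  shows "isometric (map w xs) (map v ys)"
proof (rule isometric_by_matrices
    [where P="\<lambda>q p. P (ys ! q) (xs ! p)" and Q="\<lambda>p q. Q (xs ! p) (ys ! q)"])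
  fix p p' assume "p < length (map w xs)" "p' < length (map w xs)"
  then have p: "xs ! p \<in> set xs" "xs ! p' \<in> set xs" "xs ! p = xs ! p' \<longleftrightarrow> p = p'"
    using xs by (auto simp: nth_eq_iff_index_eq)
  show "(\<Sum>q<length (map v ys). Q (xs ! p) (ys ! q) * P (ys ! q) (xs ! p'))
      = (if p = p' then 1 else 0)"
    using sum_nth_distinct[OF ys, of "\<lambda>k. Q (xs ! p) k * P k (xs ! p')"] QP[OF p(1,2)] p(3)
    by simp
  show "(\<Sum>q<length (map v ys). map v ys ! q * P (ys ! q) (xs ! p) * P (ys ! q) (xs ! p'))
      = (if p = p' then map w xs ! p else 0)"
    using sum_nth_distinct[OF ys, of "\<lambda>k. v k * P k (xs ! p) * P k (xs ! p')"]
      form[OF p(1,2)] p(3) \<open>p < length (map w xs)\<close>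
    by simp
next
  fix q q' assume "q < length (map v ys)" "q' < length (map v ys)"
  then have q: "ys ! q \<in> set ys" "ys ! q' \<in> set ys" "ys ! q = ys ! q' \<longleftrightarrow> q = q'"
    using ys by (auto simp: nth_eq_iff_index_eq)
  show "(\<Sum>p<length (map w xs). P (ys ! q) (xs ! p) * Q (xs ! p) (ys ! q'))
      = (if q = q' then 1 else 0)"
    using sum_nth_distinct[OF xs, of "\<lambda>i. P (ys ! q) i * Q i (ys ! q')"] PQ[OF q(1,2)] q(3)
    by simp
qed

definition krawtchouk_fold :: "nat \<Rightarrow> nat \<Rightarrow> nat \<Rightarrow> 'a::field" where
  "krawtchouk_fold n k i =
     (if 2 * k = n then 1 else 2) * of_int (krawtchouk n k i) / 2 ^ (n div 2)"

definition krawtchouk_unfold :: "nat \<Rightarrow> nat \<Rightarrow> nat \<Rightarrow> 'a::field" where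
  "krawtchouk_unfold n i k = 2 * of_int (krawtchouk n i k) / 2 ^ (n div 2)"

lemma power_half_mult_self:
  assumes "n = 2 * m"
  shows "(2::'a::field) ^ (n div 2) * 2 ^ (n div 2) = 2 ^ n"
  using assms by (simp add: mult_2 flip: power_add)

lemma krawtchouk_unfold_fold:
  assumes "(2::'a::field) \<noteq> 0" and n: "n = 2 * m"
    and "even i" "i < m" "even j" "j < m"
  shows "(\<Sum>k | odd k \<and> k \<le> m. krawtchouk_unfold n i k * krawtchouk_fold n k j)
       = (if i = j then 1 else (0::'a))"
proof -
  have "(\<Sum>k | odd k \<and> k \<le> m. krawtchouk_unfold n i k * krawtchouk_fold n k j)
      = of_int (\<Sum>k | odd k \<and> k \<le> m. (if k = m then 2 else 4) * (krawtchouk n i k * krawtchouk n k j))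
        / (2 ^ n :: 'a)"
    unfolding of_int_sum sum_divide_distrib power_half_mult_self[OF n, symmetric]
    using n by (intro sum.cong refl) (simp add: krawtchouk_fold_def krawtchouk_unfold_def)
  also have "\<dots> = (if i = j then 1 else 0)"
    using assms by (simp add: krawtchouk_odd_half_square)
  finally show ?thesis .
qed

lemma krawtchouk_fold_unfold:
  assumes "(2::'a::field) \<noteq> 0" and n: "n = 2 * m"
    and "odd k" "k \<le> m" "odd l" "l \<le> m"
  shows "(\<Sum>i | even i \<and> i < m. krawtchouk_fold n k i * krawtchouk_unfold n i l)
       = (if k = l then 1 else (0::'a))"
proof -
  have "(\<Sum>i | even i \<and> i < m. krawtchouk_fold n k i * krawtchouk_unfold n i l)
      = of_int ((if k = m then 2 else 4) * (\<Sum>i | even i \<and> i < m. krawtchouk n k i * krawtchouk n i l))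
        / (2 ^ n :: 'a)"
    unfolding of_int_mult of_int_sum sum_distrib_left sum_divide_distrib
      power_half_mult_self[OF n, symmetric]
    using n by (intro sum.cong refl) (simp add: krawtchouk_fold_def krawtchouk_unfold_def)
  also have "\<dots> = (if k = l then 1 else 0)"
    using assms by (simp add: krawtchouk_even_half_square)
  finally show ?thesis .
qed

lemma krawtchouk_fold_adjoint:
  assumes "n = 2 * m" "k \<le> n" "i \<le> n"
  shows "(if k = m then 2 else 1) * of_nat (n choose k) * krawtchouk_fold n k i
       = of_nat (n choose i) * (krawtchouk_unfold n i k :: 'a::field)"
proof -
  have "of_int (int (n choose k) * krawtchouk n k i)
      = (of_int (int (n choose i) * krawtchouk n i k) :: 'a)"
    using assms by (simp only: krawtchouk_binomial_symmetric)
  then show ?thesis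
    using assms by (simp add: krawtchouk_fold_def krawtchouk_unfold_def mult_ac)
qed

lemma isometric_phi_even_phi_odd:
  assumes char: "(2::'a::field) \<noteq> 0" and n: "n = 2 * m"
  shows "isometric (phi_even n :: 'a list)
           ((if odd m then [2 * of_nat (n choose m)] else []) @ phi_odd n)"
proof -
  define xs where "xs = filter (\<lambda>i. even i \<and> 2 * i < n) [0..<n]"
  define ys where "ys = (if odd m then [m] else []) @ filter (\<lambda>k. odd k \<and> 2 * k < n) [0..<n]"
  define v :: "nat \<Rightarrow> 'a" where "v k = (if k = m then 2 else 1) * of_nat (n choose k)" for k
  have xs: "distinct xs" "set xs = {i. even i \<and> i < m}"
    using n by (auto simp: xs_def)
  have ys: "distinct ys" "set ys = {k. odd k \<and> k \<le> m}"
    using n by (auto simp: ys_def le_less)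
  have form: "(\<Sum>k\<in>set ys. v k * krawtchouk_fold n k i * krawtchouk_fold n k j)
      = (if i = j then of_nat (n choose i) else 0)"
    if "i \<in> set xs" "j \<in> set xs" for i j
  proof -
    have "v k * krawtchouk_fold n k i = of_nat (n choose i) * krawtchouk_unfold n i k"
      if "k \<in> set ys" for k
      using that \<open>i \<in> set xs\<close> xs(2) ys(2) n by (simp add: v_def krawtchouk_fold_adjoint)
    then have "(\<Sum>k\<in>set ys. v k * krawtchouk_fold n k i * krawtchouk_fold n k j)
        = of_nat (n choose i) * (\<Sum>k\<in>set ys. krawtchouk_unfold n i k * krawtchouk_fold n k j)"
      by (simp add: sum_distrib_left mult.assoc)
    also have "\<dots> = (if i = j then of_nat (n choose i) else 0)"
      using that xs(2) ys(2) char n by (simp add: krawtchouk_unfold_fold)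
    finally show ?thesis .
  qed
  have "isometric (map (\<lambda>i. of_nat (n choose i)) xs) (map v ys)"
    using xs ys char n
    by (intro isometric_map_by_matrices[where P="krawtchouk_fold n" and Q="krawtchouk_unfold n"] form)
      (simp_all add: krawtchouk_unfold_fold krawtchouk_fold_unfold)
  moreover have "map v ys = (if odd m then [2 * of_nat (n choose m)] else []) @ phi_odd n"
    using n by (auto simp: v_def ys_def phi_odd_def intro!: map_cong)
  ultimately show ?thesis
    by (simp add: phi_even_def xs_def)
qed

theorem theoremB:
  fixes n :: nat
  assumes char: "(2::'a::field) \<noteq> 0"
    and pos: "n > 0" and ev: "even n"
  shows "(n mod 4 = 0 \<longrightarrow> isometric (phi_even n :: 'a list) (phi_odd n))
       \<and> (n mod 4 = 2 \<longrightarrow> isometric (phi_even n :: 'a list)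
                             ((2 * of_nat (n choose (n div 2))) # phi_odd n))"
proof -
  obtain m where n: "n = 2 * m"
    using ev by (elim evenE)
  show ?thesis
  proof (intro conjI impI)
    assume "n mod 4 = 0"
    then have "even m"
      using n by presburger
    with isometric_phi_even_phi_odd[OF char n] show "isometric (phi_even n :: 'a list) (phi_odd n)"
      by simp
  next
    assume "n mod 4 = 2"
    then have "odd m"
      using n by presburger
    with isometric_phi_even_phi_odd[OF char n] n
    show "isometric (phi_even n :: 'a list) ((2 * of_nat (n choose (n div 2))) # phi_odd n)"
      by simp
  qed
qed

end
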